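(* Let $a_2,a_3$ be integers with $1<a_2<a_3$ and $A=\{1,a_2,a_3\}$. If $SG(A,n,p)$ is a canonical stride generator, then there is no stride generator $SG(A,n',p')$ with $n'<n$ (for any $p'$).
   Context: For integers $n$ and $i\ge 0$, an integer $x$ has an $n$-generation of order $i$ if there are integers $c_1,c_2\ge 0$ with $x+ia_3=c_2a_2+c_1$ and $c_1+c_2\le n+i$. For integers $n$ and $p\ge0$, $SG(A,n,p)$ is a stride generator if: (A) every integer $0\le x<a_3$ has an $n$-generation of some order $\le p$; (B) at least one integer $0\le x<a_3$ has no $n$-generation of order $<p$; (C) at least one integer $0\le y<a_3$ has no $(n-1)$-generation of any order $\le p+1$. Any such $y$ is a break. A break $y$ is canonical if there is no integer $j\ge 0$ with $y+ja_3=c_2a_2+c_1$, $c_1,c_2\ge0$, $c_1+c_2\le (n-1)+j$. A stride generator is canonical if all its breaks are canonical. *)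

theory Defs
  imports Main
begin

definition has_gen :: "int \<Rightarrow> int \<Rightarrow> int \<Rightarrow> int \<Rightarrow> nat \<Rightarrow> bool" where
  "has_gen a2 a3 n x i \<longleftrightarrow>
     (\<exists>c1 c2 :: int. c1 \<ge> 0 \<and> c2 \<ge> 0 \<and> x + int i * a3 = c2 * a2 + c1 \<and> c1 + c2 \<le> n + int i)"

definition is_break :: "int \<Rightarrow> int \<Rightarrow> int \<Rightarrow> nat \<Rightarrow> int \<Rightarrow> bool" where
  "is_break a2 a3 n p y \<longleftrightarrow>
     0 \<le> y \<and> y < a3 \<and> (\<forall>i::nat. i \<le> p + 1 \<longrightarrow> \<not> has_gen a2 a3 (n - 1) y i)"

definition stride_generator :: "int \<Rightarrow> int \<Rightarrow> int \<Rightarrow> nat \<Rightarrow> bool" where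
  "stride_generator a2 a3 n p \<longleftrightarrow>
     (\<forall>x. 0 \<le> x \<and> x < a3 \<longrightarrow> (\<exists>i::nat. i \<le> p \<and> has_gen a2 a3 n x i)) \<and>
     (\<exists>x. 0 \<le> x \<and> x < a3 \<and> (\<forall>i::nat. i < p \<longrightarrow> \<not> has_gen a2 a3 n x i)) \<and>
     (\<exists>y. is_break a2 a3 n p y)"

definition canonical_break :: "int \<Rightarrow> int \<Rightarrow> int \<Rightarrow> int \<Rightarrow> bool" where
  "canonical_break a2 a3 n y \<longleftrightarrow> (\<forall>j::nat. \<not> has_gen a2 a3 (n - 1) y j)"

definition canonical_stride_generator :: "int \<Rightarrow> int \<Rightarrow> int \<Rightarrow> nat \<Rightarrow> bool" where
  "canonical_stride_generator a2 a3 n p \<longleftrightarrow>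
     stride_generator a2 a3 n p \<and> (\<forall>y. is_break a2 a3 n p y \<longrightarrow> canonical_break a2 a3 n y)"

end

theory Submission
  imports Defs
begin

text \<open>A canonical break \<open>y\<close> of \<open>SG(A,n,p)\<close> has no \<open>(n-1)\<close>-generation of any order.
  A stride generator \<open>SG(A,n',p')\<close> with \<open>n' < n\<close> would give \<open>y\<close> an \<open>n'\<close>-generation, and
  an \<open>n'\<close>-generation is also an \<open>(n-1)\<close>-generation of the same order.\<close>

lemma has_gen_mono:
  assumes "has_gen a2 a3 m x i" and "m \<le> k"
  shows "has_gen a2 a3 k x i"
  using assms unfolding has_gen_def by force

lemma stride_generator_has_gen:
  assumes "stride_generator a2 a3 n p" and "0 \<le> x" and "x < a3"
  obtains i where "i \<le> p" and "has_gen a2 a3 n x i"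
  using assms unfolding stride_generator_def by blast

lemma canonical_stride_generator_obtains_canonical_break:
  assumes "canonical_stride_generator a2 a3 n p"
  obtains y where "0 \<le> y" and "y < a3" and "canonical_break a2 a3 n y"
  using assms unfolding canonical_stride_generator_def stride_generator_def is_break_def
  by blast

theorem lemma13:
  fixes a2 a3 n :: int and p :: nat
  assumes "1 < a2" and "a2 < a3"
    and "canonical_stride_generator a2 a3 n p"
  shows "\<not> (\<exists>n' :: int. \<exists>p' :: nat. n' < n \<and> stride_generator a2 a3 n' p')"
proof
  assume "\<exists>n' :: int. \<exists>p' :: nat. n' < n \<and> stride_generator a2 a3 n' p'"
  then obtain n' p' where "n' < n" and sg: "stride_generator a2 a3 n' p'" by blast
  obtain y where "0 \<le> y" "y < a3" and canonical: "canonical_break a2 a3 n y"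
    using assms(3) by (rule canonical_stride_generator_obtains_canonical_break)
  then obtain i where "has_gen a2 a3 n' y i"
    using sg stride_generator_has_gen by metis
  then have "has_gen a2 a3 (n - 1) y i"
    using \<open>n' < n\<close> has_gen_mono by force
  with canonical show False
    unfolding canonical_break_def by blast
qed

end
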